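(* Let $\mathbf V$ be a locally finite variety of monoids, let $A=\{a_1,\dots,a_d\}$ be a finite alphabet, let $\sim$ be the congruence on $A^*$ given by the identities of $\mathbf V$ (so $A^*/{\sim}$ is the free monoid in $\mathbf V$ over $A$), and let $\sim_1$ be the analogous congruence on $A^*$ for the variety of monoids corresponding to $\mathsf{BPol}_1(\mathcal V)$ (so $A^*/{\sim_1}$ is the free monoid over $A$ in that variety). Define $$\xi:A^*\to (A^*/{\sim}\ \Diamond\ A^*/{\sim})^d,\qquad u\mapsto(\mu_{a_1}(u),\dots,\mu_{a_d}(u)),$$ where each $\mu_{a_i}$ is built from $\varphi=\psi=$ the canonical projection $A^*\to A^*/{\sim}$. Then $\xi(A^* )$ is isomorphic to $A^*/{\sim_1}$. In particular, if $|A^*/{\sim}|=n$, then $|A^*/{\sim_1}|\leq n2^{dn^2}$.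
   Context: $\mathcal V$ denotes the variety of languages corresponding (via Eilenberg's correspondence) to the pseudovariety of finite monoids in $\mathbf V$: a language $L\subseteq A^*$ lies in $\mathcal V(A)$ iff its syntactic monoid belongs to $\mathbf V$. $\mathsf{BPol}_1(\mathcal V)(A)$ is the class of all Boolean combinations of languages $L_0$ and $L_0bL_1$ with $L_0,L_1\in\mathcal V(A)$, $b\in A$; it is a variety of languages, and $A^*/{\sim_1}$ is the free monoid over $A$ in the corresponding variety of monoids, i.e. the smallest monoid recognizing all languages of $\mathsf{BPol}_1(\mathcal V)(A)$. For finite monoids $M,N$, the Schützenberger product $M\Diamond N$ is the set of $2\times2$ matrices $P$ with $P_{1,1}\in M$, $P_{2,2}\in N$, $P_{2,1}=\emptyset$, $P_{1,2}\subseteq M\times N$, with multiplication $(PQ)_{1,1}=P_{1,1}Q_{1,1}$, $(PQ)_{2,2}=P_{2,2}Q_{2,2}$, $(PQ)_{1,2}=\{(P_{1,1}x,y)\mid (x,y)\in Q_{1,2}\}\cup\{(z,tQ_{2,2})\mid (z,t)\in P_{1,2}\}$. Given homomorphisms $\varphi:A^*\to M$, $\psi:A^*\to N$ and $b\in A$, $\mu_b:A^*\to M\Diamond N$ is defined by $(\mu_b(u))_{1,1}=\varphi(u)$, $(\mu_b(u))_{2,2}=\psi(u)$, $(\mu_b(u))_{1,2}=\{(\varphi(u'),\psi(u''))\mid u=u'bu'',\ u',u''\in A^*\}$. *)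

theory Defs
  imports Main
begin

text \<open>A variety of monoids is given by a set of identities; an identity is a pair of
  words over the variables (natural numbers).\<close>
type_synonym ident = "nat list \<times> nat list"

text \<open>The congruence on words given by the identities E (equational derivability,
  Birkhoff): the least congruence containing all substitution instances of E.\<close>
inductive eqv :: "ident set \<Rightarrow> 'a list \<Rightarrow> 'a list \<Rightarrow> bool" for E where
  refl: "eqv E u u"
| sym: "eqv E u v \<Longrightarrow> eqv E v u"
| trans: "eqv E u v \<Longrightarrow> eqv E v w \<Longrightarrow> eqv E u w"
| ctx: "eqv E u v \<Longrightarrow> eqv E (x @ u @ y) (x @ v @ y)"
| inst: "(l, r) \<in> E \<Longrightarrow> eqv E (concat (map \<sigma> l)) (concat (map \<sigma> r))"

definition locally_finite :: "ident set \<Rightarrow> bool" where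
  "locally_finite E \<longleftrightarrow> (\<forall>k::nat. finite (lists {..<k} //
      {(u, v). u \<in> lists {..<k} \<and> v \<in> lists {..<k} \<and> eqv E u v}))"

definition synt_cong :: "'a list set \<Rightarrow> 'a list \<Rightarrow> 'a list \<Rightarrow> bool" where
  "synt_cong L u v \<longleftrightarrow> (\<forall>x y. x @ u @ y \<in> L \<longleftrightarrow> x @ v @ y \<in> L)"

text \<open>L is in the language variety of V iff its syntactic monoid satisfies all
  identities of V (every valuation in the syntactic monoid lifts to words).\<close>
definition Vlang :: "ident set \<Rightarrow> 'a list set set" where
  "Vlang E = {L. \<forall>(l, r) \<in> E. \<forall>\<sigma>. synt_cong L (concat (map \<sigma> l)) (concat (map \<sigma> r))}"

definition marked_prod :: "'a list set \<Rightarrow> 'a \<Rightarrow> 'a list set \<Rightarrow> 'a list set" where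
  "marked_prod L0 b L1 = {u @ [b] @ v | u v. u \<in> L0 \<and> v \<in> L1}"

inductive_set BPol1 :: "ident set \<Rightarrow> 'a list set set" for E where
  gen0: "L \<in> Vlang E \<Longrightarrow> L \<in> BPol1 E"
| gen1: "L0 \<in> Vlang E \<Longrightarrow> L1 \<in> Vlang E \<Longrightarrow> marked_prod L0 b L1 \<in> BPol1 E"
| compl: "L \<in> BPol1 E \<Longrightarrow> - L \<in> BPol1 E"
| union: "L \<in> BPol1 E \<Longrightarrow> K \<in> BPol1 E \<Longrightarrow> L \<union> K \<in> BPol1 E"

text \<open>sim_1: the congruence of the smallest monoid recognizing all languages of BPol_1(V)(A).\<close>
definition sim1 :: "ident set \<Rightarrow> 'a list \<Rightarrow> 'a list \<Rightarrow> bool" where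
  "sim1 E u v \<longleftrightarrow> (\<forall>L \<in> BPol1 E. synt_cong L u v)"

definition cls :: "('a list \<Rightarrow> 'a list \<Rightarrow> bool) \<Rightarrow> 'a list \<Rightarrow> 'a list set" where
  "cls R u = {v. R u v}"

definition cmul :: "('a list \<Rightarrow> 'a list \<Rightarrow> bool) \<Rightarrow> 'a list set \<Rightarrow> 'a list set \<Rightarrow> 'a list set" where
  "cmul R X Y = \<Union> {cls R (u @ v) | u v. u \<in> X \<and> v \<in> Y}"

text \<open>Schuetzenberger product elements: (P11, P12, P22).\<close>
type_synonym 'm sp = "'m \<times> ('m \<times> 'm) set \<times> 'm"

fun sp_mult :: "('m \<Rightarrow> 'm \<Rightarrow> 'm) \<Rightarrow> 'm sp \<Rightarrow> 'm sp \<Rightarrow> 'm sp" where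
  "sp_mult mul (m1, S1, n1) (m2, S2, n2) =
     (mul m1 m2,
      {(mul m1 x, y) | x y. (x, y) \<in> S2} \<union> {(z, mul t n2) | z t. (z, t) \<in> S1},
      mul n1 n2)"

definition mu :: "('a list \<Rightarrow> 'm) \<Rightarrow> ('a list \<Rightarrow> 'm) \<Rightarrow> 'a \<Rightarrow> 'a list \<Rightarrow> 'm sp" where
  "mu \<phi> \<psi> b u = (\<phi> u, {(\<phi> u', \<psi> u'') | u' u''. u = u' @ [b] @ u''}, \<psi> u)"

definition xi :: "ident set \<Rightarrow> 'a list \<Rightarrow> ('a \<Rightarrow> 'a list set sp)" where
  "xi E u = (\<lambda>b. mu (cls (eqv E)) (cls (eqv E)) b u)"

definition xi_mult :: "ident set \<Rightarrow> ('a \<Rightarrow> 'a list set sp) \<Rightarrow> ('a \<Rightarrow> 'a list set sp) \<Rightarrow> ('a \<Rightarrow> 'a list set sp)" where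
  "xi_mult E p q = (\<lambda>b. sp_mult (cmul (eqv E)) (p b) (q b))"

end

theory Submission
  imports Defs "HOL-Library.FuncSet"
begin

text \<open>The value \<open>xi E u\<close> records the \<open>\<sim>\<close>-class of \<open>u\<close> and, for every letter \<open>b\<close>, the set of
  pairs of \<open>\<sim>\<close>-classes of the factorisations \<open>u = u' b u''\<close>; \<open>xi E\<close> is a morphism onto its image.
  Two words are \<open>\<sim>\<^sub>1\<close>-equivalent iff they have the same image under \<open>xi E\<close>: the image determines
  membership in every generator \<open>L\<^sub>0\<close> and \<open>L\<^sub>0 b L\<^sub>1\<close> of \<open>BPol\<^sub>1\<close>, hence in every language of
  \<open>BPol\<^sub>1\<close>, and conversely the \<open>\<sim>\<close>-classes \<open>[u]\<close> and the products \<open>[u'] b [u'']\<close> are themselves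
  languages of \<open>BPol\<^sub>1\<close>, so \<open>\<sim>\<^sub>1\<close> recovers the image. The size bound counts the possible images:
  one class of \<open>A\<^sup>*/\<sim>\<close> and one subset of \<open>(A\<^sup>*/\<sim>)\<^sup>2\<close> per letter.\<close>

lemma mem_cls_iff: "v \<in> cls R u \<longleftrightarrow> R u v"
  unfolding cls_def by simp

lemma quotient_UNIV_eq_range_cls: "UNIV // {(u, v). R u v} = range (cls R)"
  unfolding cls_def quotient_def by auto

lemma cls_eq_iff: "equivp R \<Longrightarrow> cls R u = cls R v \<longleftrightarrow> R u v"
  unfolding cls_def equivp_def by (metis mem_Collect_eq)

lemma cmul_cls:
  assumes "equivp R" and cong: "\<And>u u' v v'. R u u' \<Longrightarrow> R v v' \<Longrightarrow> R (u @ v) (u' @ v')"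
  shows "cmul R (cls R u) (cls R v) = cls R (u @ v)"
proof -
  have "{cls R (u' @ v') | u' v'. u' \<in> cls R u \<and> v' \<in> cls R v} = {cls R (u @ v)}"
  proof (intro equalityI subsetI)
    fix X assume "X \<in> {cls R (u' @ v') | u' v'. u' \<in> cls R u \<and> v' \<in> cls R v}"
    then obtain u' v' where "X = cls R (u' @ v')" "R u u'" "R v v'" unfolding cls_def by blast
    then have "X = cls R (u @ v)"
      using cong cls_eq_iff[OF \<open>equivp R\<close>, of "u @ v" "u' @ v'"] by simp
    then show "X \<in> {cls R (u @ v)}" by simp
  next
    have "u \<in> cls R u" "v \<in> cls R v"
      using \<open>equivp R\<close> unfolding cls_def by (simp_all add: equivp_reflp)
    then show "X \<in> {cls R (u' @ v') | u' v'. u' \<in> cls R u \<and> v' \<in> cls R v}"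
      if "X \<in> {cls R (u @ v)}" for X using that by blast
  qed
  then show ?thesis unfolding cmul_def by simp
qed

lemma cls_inv_apply:
  assumes "\<And>u v. R u v \<longleftrightarrow> h u = h v"
  shows "cls R (inv h (h u)) = cls R u"
  unfolding cls_def assms by (simp add: f_inv_into_f)

lemma bij_betw_range_kernel_quotient:
  assumes kernel: "\<And>u v. R u v \<longleftrightarrow> h u = h v"
  shows "bij_betw (cls R \<circ> inv h) (range h) (UNIV // {(u, v). R u v})"
proof -
  have cls_inv: "(cls R \<circ> inv h) (h u) = cls R u" for u
    using cls_inv_apply[OF kernel] by simp
  have cls_eq: "cls R u = cls R v \<longleftrightarrow> h u = h v" for u v
    unfolding cls_def kernel by (auto simp: fun_eq_iff)
  show ?thesis
    unfolding bij_betw_def quotient_UNIV_eq_range_cls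
  proof
    show "inj_on (cls R \<circ> inv h) (range h)"
      by (rule inj_onI) (metis cls_inv cls_eq rangeE)
    show "(cls R \<circ> inv h) ` range h = range (cls R)"
      unfolding image_image cls_inv ..
  qed
qed

lemma equivp_eqv: "equivp (eqv E)"
  by (intro equivpI reflpI sympI transpI) (fact eqv.refl eqv.sym eqv.trans)+

lemma eqv_append: "eqv E u v \<Longrightarrow> eqv E u' v' \<Longrightarrow> eqv E (u @ u') (v @ v')"
  using eqv.ctx[of E u v "[]" u'] eqv.ctx[of E u' v' v "[]"] eqv.trans by simp

lemma eqv_map: "eqv E u v \<Longrightarrow> eqv E (map h u) (map h v)"
proof (induction rule: eqv.induct)
  case (ctx u v x y)
  then show ?case using eqv.ctx[of E "map h u" "map h v" "map h x" "map h y"] by simp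
next
  case (inst l r \<sigma>)
  then show ?case using eqv.inst[of l r E "map h \<circ> \<sigma>"] by (simp add: map_concat)
qed (blast intro: eqv.refl eqv.sym eqv.trans)+

lemma cmul_eqv_cls: "cmul (eqv E) (cls (eqv E) u) (cls (eqv E) v) = cls (eqv E) (u @ v)"
  by (rule cmul_cls[OF equivp_eqv eqv_append])

text \<open>Local finiteness is stated for the alphabets \<open>{..<k}\<close>; a bijection of the letters transfers it.\<close>
lemma finite_eqv_quotient:
  assumes "locally_finite E"
  shows "finite (UNIV // {(u :: 'a::finite list, v). eqv E u v})"
proof -
  obtain k and g :: "'a \<Rightarrow> nat" where g: "bij_betw g UNIV {..<k}"
    using ex_bij_betw_finite_nat[of "UNIV :: 'a set"] lessThan_atLeast0 by auto
  define R where "R = {(u, v). u \<in> lists {..<k} \<and> v \<in> lists {..<k} \<and> eqv E u v}"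
  have gg: "inv g (g a) = a" for a
    using g by (simp add: bij_betw_def)
  have g_less: "g a < k" for a
    using bij_betwE[OF g] by auto
  then have g_lists: "map g u \<in> lists {..<k}" for u
    by auto
  have "cls (eqv E) u = map (inv g) ` (R `` {map g u})" for u
  proof (intro equalityI subsetI)
    fix v assume "v \<in> cls (eqv E) u"
    then have "map g v \<in> R `` {map g u}"
      unfolding cls_def R_def by (simp add: eqv_map g_lists)
    moreover have "v = map (inv g) (map g v)" by (simp add: gg comp_def)
    ultimately show "v \<in> map (inv g) ` (R `` {map g u})" by blast
  next
    fix v assume "v \<in> map (inv g) ` (R `` {map g u})"
    then obtain w where "v = map (inv g) w" "eqv E (map g u) w" unfolding R_def by blast
    then show "v \<in> cls (eqv E) u"
      unfolding cls_def using eqv_map[of E "map g u" w "inv g"] by (simp add: gg comp_def)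
  qed
  moreover have "R `` {map g u} \<in> lists {..<k} // R" for u
    using g_lists by (rule quotientI)
  ultimately have "UNIV // {(u, v). eqv E u v} \<subseteq> image (map (inv g)) ` (lists {..<k} // R)"
    unfolding quotient_UNIV_eq_range_cls by blast
  moreover have "finite (lists {..<k} // R)"
    using assms unfolding locally_finite_def R_def by blast
  ultimately show ?thesis by (meson finite_surj)
qed

definition cut_classes :: "ident set \<Rightarrow> 'a \<Rightarrow> 'a list \<Rightarrow> ('a list set \<times> 'a list set) set" where
  "cut_classes E b u = (\<lambda>(x, y). (cls (eqv E) x, cls (eqv E) y)) ` {(x, y). u = x @ b # y}"

lemma xi_apply: "xi E u b = (cls (eqv E) u, cut_classes E b u, cls (eqv E) u)"
  unfolding xi_def mu_def cut_classes_def by auto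

lemma xi_eq_iff: "xi E u = xi E v \<longleftrightarrow> eqv E u v \<and> (\<forall>b. cut_classes E b u = cut_classes E b v)"
  unfolding fun_eq_iff[of "xi E u"] xi_apply prod.inject cls_eq_iff[OF equivp_eqv] by blast

lemma append_eq_append_Cons_conv:
  "u @ v = x @ b # y \<longleftrightarrow>
     (\<exists>v'. x = u @ v' \<and> v = v' @ b # y) \<or> (\<exists>u''. u = x @ b # u'' \<and> y = u'' @ v)"
  by (auto simp: append_eq_append_conv2 append_eq_Cons_conv)

lemma factorisations_append:
  "{(x, y). u @ v = x @ b # y} =
     (\<lambda>(x, y). (u @ x, y)) ` {(x, y). v = x @ b # y} \<union> (\<lambda>(x, y). (x, y @ v)) ` {(x, y). u = x @ b # y}"
  by (auto simp: append_eq_append_Cons_conv image_iff)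

lemma cut_classes_append:
  "cut_classes E b (u @ v) =
     (\<lambda>(x, y). (cmul (eqv E) (cls (eqv E) u) x, y)) ` cut_classes E b v \<union>
     (\<lambda>(x, y). (x, cmul (eqv E) y (cls (eqv E) v))) ` cut_classes E b u"
  unfolding cut_classes_def factorisations_append image_Un image_image
  by (simp add: case_prod_beta cmul_eqv_cls)

lemma xi_mult_xi: "xi_mult E (xi E u) (xi E v) = xi E (u @ v)"
proof
  fix b
  have compr_image: "{(f x, y) | x y. (x, y) \<in> S} = (\<lambda>(x, y). (f x, y)) ` S"
    "{(x, g y) | x y. (x, y) \<in> S} = (\<lambda>(x, y). (x, g y)) ` S" for f :: "'c \<Rightarrow> 'e" and g :: "'d \<Rightarrow> 'f" and S :: "('c \<times> 'd) set"
    by auto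
  show "xi_mult E (xi E u) (xi E v) b = xi E (u @ v) b"
    unfolding xi_mult_def xi_apply sp_mult.simps compr_image cmul_eqv_cls cut_classes_append ..
qed

lemma Vlang_synt_cong: "eqv E u v \<Longrightarrow> L \<in> Vlang E \<Longrightarrow> synt_cong L u v"
proof (induction rule: eqv.induct)
  case (ctx u v x y)
  then show ?case unfolding synt_cong_def by (metis append.assoc)
next
  case (inst l r \<sigma>)
  then show ?case unfolding Vlang_def by blast
qed (auto simp: synt_cong_def)

lemma synt_cong_mem: "synt_cong L u v \<Longrightarrow> u \<in> L \<longleftrightarrow> v \<in> L"
  unfolding synt_cong_def by (metis append_Nil append_Nil2)

lemma Vlang_mem_iff_cls_subset: "L \<in> Vlang E \<Longrightarrow> u \<in> L \<longleftrightarrow> cls (eqv E) u \<subseteq> L"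
  using Vlang_synt_cong[of E u _ L] synt_cong_mem unfolding mem_cls_iff[symmetric] subset_iff
  by (metis eqv.refl mem_cls_iff)

lemma cls_in_Vlang: "cls (eqv E) w \<in> Vlang E"
  unfolding Vlang_def synt_cong_def
proof clarify
  fix l r \<sigma> and x y :: "'a list"
  assume "(l, r) \<in> E"
  then have "eqv E (x @ concat (map \<sigma> l) @ y) (x @ concat (map \<sigma> r) @ y)"
    by (intro eqv.ctx eqv.inst)
  then show "x @ concat (map \<sigma> l) @ y \<in> cls (eqv E) w \<longleftrightarrow> x @ concat (map \<sigma> r) @ y \<in> cls (eqv E) w"
    unfolding mem_cls_iff by (meson eqv.sym eqv.trans)
qed

lemma mem_marked_prod_iff_cut_classes:
  assumes "L0 \<in> Vlang E" "L1 \<in> Vlang E"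
  shows "u \<in> marked_prod L0 b L1 \<longleftrightarrow> (\<exists>(X, Y) \<in> cut_classes E b u. X \<subseteq> L0 \<and> Y \<subseteq> L1)"
  unfolding marked_prod_def cut_classes_def
  using Vlang_mem_iff_cls_subset[OF assms(1)] Vlang_mem_iff_cls_subset[OF assms(2)] by auto

lemma BPol1_mem_iff_of_xi_eq:
  "L \<in> BPol1 E \<Longrightarrow> xi E u = xi E v \<Longrightarrow> u \<in> L \<longleftrightarrow> v \<in> L"
proof (induction rule: BPol1.induct)
  case (gen0 L)
  then show ?case by (simp add: Vlang_mem_iff_cls_subset xi_eq_iff cls_eq_iff[OF equivp_eqv, symmetric])
next
  case (gen1 L0 L1 b)
  then show ?case by (simp add: mem_marked_prod_iff_cut_classes xi_eq_iff)
qed auto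

lemma cls_pair_in_cut_classes_iff:
  "(cls (eqv E) x, cls (eqv E) y) \<in> cut_classes E b u \<longleftrightarrow>
     u \<in> marked_prod (cls (eqv E) x) b (cls (eqv E) y)"
proof -
  have "(cls (eqv E) x, cls (eqv E) y) \<in> cut_classes E b u \<longleftrightarrow>
      (\<exists>u' u''. u = u' @ b # u'' \<and> cls (eqv E) x = cls (eqv E) u' \<and> cls (eqv E) y = cls (eqv E) u'')"
    unfolding cut_classes_def by (simp add: image_iff)
  then show ?thesis
    unfolding marked_prod_def cls_eq_iff[OF equivp_eqv] mem_cls_iff by simp
qed

lemma cut_classes_subset: "cut_classes E b u \<subseteq> range (cls (eqv E)) \<times> range (cls (eqv E))"
  unfolding cut_classes_def by auto

lemma sim1_iff_xi_eq: "sim1 E u v \<longleftrightarrow> xi E u = xi E v"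
proof
  assume xi_eq: "xi E u = xi E v"
  show "sim1 E u v"
    unfolding sim1_def synt_cong_def
  proof (intro ballI allI)
    fix L :: "'a list set" and x y assume "L \<in> BPol1 E"
    moreover have "xi E (x @ u @ y) = xi E (x @ v @ y)"
      using xi_eq by (simp flip: xi_mult_xi)
    ultimately show "x @ u @ y \<in> L \<longleftrightarrow> x @ v @ y \<in> L"
      by (rule BPol1_mem_iff_of_xi_eq)
  qed
next
  assume "sim1 E u v"
  then have mem: "u \<in> L \<longleftrightarrow> v \<in> L" if "L \<in> BPol1 E" for L
    using that synt_cong_mem unfolding sim1_def by blast
  have "eqv E u v"
    using mem[OF BPol1.gen0[OF cls_in_Vlang[of E u]]] by (simp add: mem_cls_iff eqv.refl)
  moreover have "cut_classes E b u = cut_classes E b v" for b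
  proof -
    have "p \<in> cut_classes E b u \<longleftrightarrow> p \<in> cut_classes E b v"
      if "p \<in> range (cls (eqv E)) \<times> range (cls (eqv E))" for p
    proof -
      from that obtain x y where "p = (cls (eqv E) x, cls (eqv E) y)" by blast
      then show ?thesis
        using mem[OF BPol1.gen1[OF cls_in_Vlang cls_in_Vlang]] by (simp add: cls_pair_in_cut_classes_iff)
    qed
    then show ?thesis using cut_classes_subset[of E b u] cut_classes_subset[of E b v] by blast
  qed
  ultimately show "xi E u = xi E v" by (simp add: xi_eq_iff)
qed

lemma cmul_sim1_cls: "cmul (sim1 E) (cls (sim1 E) u) (cls (sim1 E) v) = cls (sim1 E) (u @ v)"
proof (rule cmul_cls)
  show "equivp (sim1 E)"
    unfolding sim1_iff_xi_eq by (intro equivpI reflpI sympI transpI) auto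
  show "sim1 E (u @ v) (u' @ v')" if "sim1 E u u'" "sim1 E v v'" for u u' v v' :: "'a list"
    using that unfolding sim1_iff_xi_eq by (metis xi_mult_xi)
qed

lemma card_range_xi_le:
  fixes E :: "ident set"
  defines "C \<equiv> UNIV // {(u :: 'a::finite list, v). eqv E u v}"
  assumes "finite C"
  shows "card (range (xi E :: 'a list \<Rightarrow> _)) \<le> card C * 2 ^ (card (UNIV :: 'a set) * card C ^ 2)"
proof -
  define P where "P = (UNIV :: 'a set) \<rightarrow>\<^sub>E Pow (C \<times> C)"
  have "range (xi E :: 'a list \<Rightarrow> _) \<subseteq> (\<lambda>(c, s) b. (c, s b, c)) ` (C \<times> P)"
  proof
    fix X assume "X \<in> range (xi E :: 'a list \<Rightarrow> _)"
    then obtain u where "X = xi E u" by blast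
    then have "X = (\<lambda>(c, s) b. (c, s b, c)) (cls (eqv E) u, \<lambda>b. cut_classes E b u)"
      by (simp add: fun_eq_iff xi_apply)
    moreover have "cut_classes E b u \<subseteq> C \<times> C" for b
      using cut_classes_subset unfolding C_def quotient_UNIV_eq_range_cls .
    then have "(cls (eqv E) u, \<lambda>b. cut_classes E b u) \<in> C \<times> P"
      unfolding C_def P_def quotient_UNIV_eq_range_cls by auto
    ultimately show "X \<in> (\<lambda>(c, s) b. (c, s b, c)) ` (C \<times> P)" by blast
  qed
  moreover have "finite (C \<times> P)"
    using \<open>finite C\<close> unfolding P_def by (simp add: finite_PiE)
  ultimately have "card (range (xi E :: 'a list \<Rightarrow> _)) \<le> card (C \<times> P)"
    by (meson card_image_le card_mono finite_imageI order_trans)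
  also have "\<dots> = card C * (2 ^ (card C * card C)) ^ card (UNIV :: 'a set)"
    using \<open>finite C\<close> by (simp add: P_def card_cartesian_product card_PiE card_Pow)
  also have "\<dots> = card C * 2 ^ (card (UNIV :: 'a set) * card C ^ 2)"
    by (simp add: power_mult[symmetric] power2_eq_square ac_simps)
  finally show ?thesis .
qed

theorem proposition7:
  fixes E :: "ident set"
  assumes "locally_finite E"
  shows "(\<exists>f. bij_betw f (range (xi E :: 'a::finite list \<Rightarrow> _)) (UNIV // {(u :: 'a list, v). sim1 E u v})
             \<and> (\<forall>u v. f (xi_mult E (xi E u) (xi E v)) = cmul (sim1 E) (f (xi E u)) (f (xi E v))))
         \<and> (let n = card (UNIV // {(u :: 'a list, v). eqv E u v})
            in card (UNIV // {(u :: 'a list, v). sim1 E u v}) \<le> n * 2 ^ (card (UNIV :: 'a set) * n ^ 2))"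
proof -
  let ?f = "cls (sim1 E) \<circ> inv (xi E :: 'a list \<Rightarrow> _)"
  have bij: "bij_betw ?f (range (xi E)) (UNIV // {(u :: 'a list, v). sim1 E u v})"
    using bij_betw_range_kernel_quotient sim1_iff_xi_eq by blast
  have f_xi: "?f (xi E u) = cls (sim1 E) u" for u
    using cls_inv_apply[of "sim1 E" "xi E", OF sim1_iff_xi_eq] by simp
  have "\<forall>u v. ?f (xi_mult E (xi E u) (xi E v)) = cmul (sim1 E) (?f (xi E u)) (?f (xi E v))"
    unfolding f_xi xi_mult_xi cmul_sim1_cls by simp
  with bij have iso: "\<exists>f. bij_betw f (range (xi E :: 'a list \<Rightarrow> _)) (UNIV // {(u :: 'a list, v). sim1 E u v})
      \<and> (\<forall>u v. f (xi_mult E (xi E u) (xi E v)) = cmul (sim1 E) (f (xi E u)) (f (xi E v)))"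
    by blast
  have "card (UNIV // {(u :: 'a list, v). sim1 E u v}) = card (range (xi E :: 'a list \<Rightarrow> _))"
    using bij_betw_same_card[OF bij] by simp
  with card_range_xi_le[OF finite_eqv_quotient[OF assms]] iso show ?thesis
    unfolding Let_def by simp
qed

end
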